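(* Let $X=\{(u,v,w)\in\mathbb{R}^3:u\le0,\ v\le0,\ w\le 0,\ uv+w-1\le0\}$ with the Euclidean topology $\tau$ and the coordinatewise partial order $\preceq$. Then $(X,\tau,\preceq)$ is a locally compact, order-connected Hausdorff topological $\wedge$-semilattice, and the canonical map $x\mapsto x^\downarrow$ satisfies: (i) it topologically order-embeds $(X,\tau,\preceq)$ in $(C(X),\tau_F,\subseteq)$; (ii) as a map from $(X,\tau)$ to $(C^\downarrow(X),\tau_H)$ it is discontinuous at every point of $X$; (iii) as a map from $(X,\tau)$ to $(C^\downarrow(X),\tau_V)$ it is discontinuous at every point of $X\setminus\{(0,0,0)\}$ and continuous at $(0,0,0)$.
   Context: A partially ordered topological space is a topological space with a partial order whose graph is closed in the product; a topological $\wedge$-semilattice is one in which every pair has an infimum in $X$ and $\wedge:X\times X\to X$ is continuous. $x^\downarrow=\{u\in X:u\preceq x\}$, $x^\uparrow=\{u\in X:x\preceq u\}$ (inside $X$); order-connected means $x^\uparrow\cap y^\downarrow$ is connected whenever $x\preceq y$. $C(X)$ = closed subsets of $X$, $C^\downarrow(X)=\{x^\downarrow:x\in X\}$. Fell topology $\tau_F$: generated by $\{A:A\cap O\neq\emptyset\}$ ($O$ open) and $\{A:A\cap D=\emptyset\}$ ($D$ compact). Vietoris topology $\tau_V$: generated by $\{A:A\cap O\neq\emptyset\}$ ($O$ open) and $\{A:A\cap E=\emptyset\}$ ($E$ closed). $\tau_H$ is the topology induced by the (extended-valued) Hausdorff distance $H(A,B)=\max\{\sup_{a\in A}\inf_{b\in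 B}d(a,b),\ \sup_{b\in B}\inf_{a\in A}d(a,b)\}$, $d$ Euclidean metric. "Topologically order-embeds": $x\preceq y\iff x^\downarrow\subseteq y^\downarrow$ and $x\mapsto x^\downarrow$ is a homeomorphism onto $C^\downarrow(X)$ with the relative Fell topology. *)

theory Defs
  imports "HOL-Analysis.Analysis"
begin

text \<open>Points of R^3 are triples (u,v,w) :: real \<times> real \<times> real; the euclidean
  topology on this type is the product (= Euclidean) topology, its dist is the
  Euclidean metric, and the order (Product_Order) is the coordinatewise order.\<close>

definition Xset :: "(real \<times> real \<times> real) set" where
  "Xset = {(u,v,w). u \<le> 0 \<and> v \<le> 0 \<and> w \<le> 0 \<and> u * v + w - 1 \<le> 0}"

definition down_in :: "'a::ord set \<Rightarrow> 'a \<Rightarrow> 'a set" where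
  "down_in X x = {u \<in> X. u \<le> x}"

definition up_in :: "'a::ord set \<Rightarrow> 'a \<Rightarrow> 'a set" where
  "up_in X x = {u \<in> X. x \<le> u}"

definition pospace :: "'a::order topology \<Rightarrow> bool" where
  "pospace T \<longleftrightarrow> closedin (prod_topology T T)
      {(x,y). x \<in> topspace T \<and> y \<in> topspace T \<and> x \<le> y}"

definition is_inf_in :: "'a::ord set \<Rightarrow> 'a \<Rightarrow> 'a \<Rightarrow> 'a \<Rightarrow> bool" where
  "is_inf_in X x y z \<longleftrightarrow> z \<in> X \<and> z \<le> x \<and> z \<le> y \<and>
      (\<forall>w\<in>X. w \<le> x \<and> w \<le> y \<longrightarrow> w \<le> z)"

definition meet_in :: "'a::ord set \<Rightarrow> 'a \<Rightarrow> 'a \<Rightarrow> 'a" where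
  "meet_in X x y = (THE z. is_inf_in X x y z)"

definition top_meet_semilattice :: "'a::order topology \<Rightarrow> bool" where
  "top_meet_semilattice T \<longleftrightarrow>
     pospace T \<and>
     (\<forall>x\<in>topspace T. \<forall>y\<in>topspace T. \<exists>z. is_inf_in (topspace T) x y z) \<and>
     continuous_map (prod_topology T T) T (\<lambda>(x,y). meet_in (topspace T) x y)"

definition order_connected :: "'a::order topology \<Rightarrow> bool" where
  "order_connected T \<longleftrightarrow>
     (\<forall>x\<in>topspace T. \<forall>y\<in>topspace T. x \<le> y \<longrightarrow>
        connectedin T (up_in (topspace T) x \<inter> down_in (topspace T) y))"

definition closed_sets :: "'a topology \<Rightarrow> 'a set set" where
  "closed_sets T = {A. closedin T A}"

definition down_sets :: "'a::ord topology \<Rightarrow> 'a set set" where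
  "down_sets T = down_in (topspace T) ` topspace T"

definition fell_topology :: "'a topology \<Rightarrow> 'a set topology" where
  "fell_topology T = topology_generated_by
     ({{A \<in> closed_sets T. A \<inter> V \<noteq> {}} | V. openin T V} \<union>
      {{A \<in> closed_sets T. A \<inter> D = {}} | D. compactin T D})"

definition vietoris_topology :: "'a topology \<Rightarrow> 'a set topology" where
  "vietoris_topology T = topology_generated_by
     ({{A \<in> closed_sets T. A \<inter> V \<noteq> {}} | V. openin T V} \<union>
      {{A \<in> closed_sets T. A \<inter> E = {}} | E. closedin T E})"

definition ext_hausdist :: "'a::metric_space set \<Rightarrow> 'a set \<Rightarrow> ereal" where
  "ext_hausdist A B = max (SUP a\<in>A. INF b\<in>B. ereal (dist a b))
                          (SUP b\<in>B. INF a\<in>A. ereal (dist a b))"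

definition hausdorff_topology :: "'a::metric_space set set \<Rightarrow> 'a set topology" where
  "hausdorff_topology \<C> = topology (\<lambda>U. U \<subseteq> \<C> \<and>
     (\<forall>A\<in>U. \<exists>e>0. \<forall>B\<in>\<C>. ext_hausdist A B < ereal e \<longrightarrow> B \<in> U))"

definition continuous_at_pt :: "'a topology \<Rightarrow> 'b topology \<Rightarrow> ('a \<Rightarrow> 'b) \<Rightarrow> 'a \<Rightarrow> bool" where
  "continuous_at_pt T S f x \<longleftrightarrow> x \<in> topspace T \<and> f x \<in> topspace S \<and>
     (\<forall>V. openin S V \<and> f x \<in> V \<longrightarrow> (\<exists>U. openin T U \<and> x \<in> U \<and> f ` U \<subseteq> V))"

end

theory Submission
  imports Defs
begin

text \<open>
  X is closed; the meet of two points is the largest point of X below their coordinatewise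
  infimum, and an order interval of X is a flat box at its lowest height together with vertical
  segments rising from it. The down-set map is Fell-continuous because a point of an open subset V
  of X can be pushed strictly down inside V (so that \<open>\<down>x\<close> meeting V is an open condition on x)
  and because up-sets of compact sets are closed; conversely, if \<open>\<down>y\<close> meets a small ball around x
  and misses the compact part of X lying above x - d but not strictly below x + d, then y is close
  to x.

  The surface uv + w = 1 makes down-sets wide: \<open>\<down>(a,b,c)\<close> contains the points (a, v, c - av) for
  v \<rightarrow> -\<infinity>, which are arbitrarily far from \<open>\<down>y\<close> as soon as the first coordinate of y is below a,
  so the map is nowhere Hausdorff-continuous. Similarly, raising a negative coordinate of x by t
  produces down-sets meeting a closed set such as {(u - a)(1 - v) \<ge> 1} which \<open>\<down>x\<close> misses, so the
  map is Vietoris-discontinuous away from the origin. At the origin \<open>\<down>0\<close> = X, and a Vietoris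
  neighbourhood of the whole space only asks to meet finitely many open sets.
\<close>

section \<open>Hyperspace topologies\<close>

lemma down_in_subset_down_in_iff:
  fixes x y :: "'a::order"
  assumes "x \<in> X" "y \<in> X"
  shows "down_in X x \<subseteq> down_in X y \<longleftrightarrow> x \<le> y"
  using assms by (auto simp: down_in_def intro: order_trans)

lemma topspace_fell_topology: "topspace (fell_topology T) = closed_sets T"
proof -
  have "A \<in> {A \<in> closed_sets T. A \<inter> {} = {}}"
    "{A \<in> closed_sets T. A \<inter> {} = {}} \<in> {{A \<in> closed_sets T. A \<inter> D = {}} | D. compactin T D}"
    if "A \<in> closed_sets T" for A
    using that by auto
  then show ?thesis
    unfolding fell_topology_def topology_generated_by_topspace by blast
qed

lemma topspace_vietoris_topology: "topspace (vietoris_topology T) = closed_sets T"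
proof -
  have "A \<in> {A \<in> closed_sets T. A \<inter> {} = {}}"
    "{A \<in> closed_sets T. A \<inter> {} = {}} \<in> {{A \<in> closed_sets T. A \<inter> E = {}} | E. closedin T E}"
    if "A \<in> closed_sets T" for A
    using that by auto
  then show ?thesis
    unfolding vietoris_topology_def topology_generated_by_topspace by blast
qed

lemma continuous_at_pt_vietoris_miss:
  assumes cont: "continuous_at_pt S (subtopology (vietoris_topology T) \<C>) f x"
    and E: "closedin T E" and miss: "f x \<inter> E = {}"
  obtains U where "openin S U" "x \<in> U" "\<And>y. y \<in> U \<Longrightarrow> f y \<inter> E = {}"
proof -
  let ?W = "{A \<in> closed_sets T. A \<inter> E = {}}"
  have "openin (vietoris_topology T) ?W"
    unfolding vietoris_topology_def using E by (intro topology_generated_by_Basis) blast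
  then have "openin (subtopology (vietoris_topology T) \<C>) (?W \<inter> \<C>)"
    by (auto simp: openin_subtopology)
  moreover have "f x \<in> ?W \<inter> \<C>"
    using cont miss by (auto simp: continuous_at_pt_def topspace_vietoris_topology)
  ultimately obtain U where U: "openin S U" "x \<in> U" "f ` U \<subseteq> ?W \<inter> \<C>"
    using cont unfolding continuous_at_pt_def by blast
  show ?thesis
  proof (rule that[OF U(1,2)])
    show "f y \<inter> E = {}" if "y \<in> U" for y
      using U(3) that by auto
  qed
qed

lemma vietoris_nbhd_of_topspace:
  assumes "openin (vietoris_topology T) W" "topspace T \<in> W"
  obtains \<V> where "finite \<V>" "\<forall>V\<in>\<V>. openin T V \<and> V \<noteq> {}"
    "\<forall>A\<in>closed_sets T. (\<forall>V\<in>\<V>. A \<inter> V \<noteq> {}) \<longrightarrow> A \<in> W"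
proof -
  define hits_all where "hits_all \<V> W' \<longleftrightarrow> finite \<V> \<and> (\<forall>V\<in>\<V>. openin T V \<and> V \<noteq> {}) \<and>
      (\<forall>A\<in>closed_sets T. (\<forall>V\<in>\<V>. A \<inter> V \<noteq> {}) \<longrightarrow> A \<in> W')" for \<V> W'
  have "generate_topology_on
      ({{A \<in> closed_sets T. A \<inter> V \<noteq> {}} | V. openin T V} \<union>
       {{A \<in> closed_sets T. A \<inter> E = {}} | E. closedin T E}) W"
    using assms(1) unfolding vietoris_topology_def openin_topology_generated_by_iff .
  then have "topspace T \<in> W \<longrightarrow> (\<exists>\<V>. hits_all \<V> W)"
  proof (induction rule: generate_topology_on.induct)
    case (Int W1 W2)
    have "hits_all (\<V>1 \<union> \<V>2) (W1 \<inter> W2)" if "hits_all \<V>1 W1" "hits_all \<V>2 W2" for \<V>1 \<V>2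
      using that unfolding hits_all_def by auto
    then show ?case using Int.IH by blast
  next
    case (UN K)
    have "hits_all \<V> (\<Union>K)" if "hits_all \<V> W'" "W' \<in> K" for \<V> W'
      using that unfolding hits_all_def by blast
    then show ?case using UN.IH by blast
  next
    case (Basis B)
    then consider V where "openin T V" "B = {A \<in> closed_sets T. A \<inter> V \<noteq> {}}"
      | E where "closedin T E" "B = {A \<in> closed_sets T. A \<inter> E = {}}"
      by blast
    then show ?case
    proof cases
      case 1
      then show ?thesis unfolding hits_all_def by (intro impI exI[of _ "{V}"]) auto
    next
      case 2
      have "hits_all {} B" if "topspace T \<in> B"
      proof -
        have "E = {}" using 2 that closedin_subset by blast
        then show ?thesis using 2 unfolding hits_all_def by simp
      qed
      then show ?thesis by blast
    qed
  qed simp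
  then show ?thesis
    using assms(2) that unfolding hits_all_def by blast
qed

lemma openin_hausdorff_topology:
  "openin (hausdorff_topology \<C>) U \<longleftrightarrow>
     U \<subseteq> \<C> \<and> (\<forall>A\<in>U. \<exists>e>0. \<forall>B\<in>\<C>. ext_hausdist A B < ereal e \<longrightarrow> B \<in> U)"
proof -
  define near where "near U A \<longleftrightarrow> (\<exists>e>0. \<forall>B\<in>\<C>. ext_hausdist A B < ereal e \<longrightarrow> B \<in> U)" for U A
  have near_mono: "near U' A" if "near U A" "U \<subseteq> U'" for U U' A
    using that unfolding near_def by blast
  have near_Int: "near (U1 \<inter> U2) A" if near12: "near U1 A" "near U2 A" for U1 U2 A
  proof -
    obtain e1 e2 where "e1 > 0" "\<forall>B\<in>\<C>. ext_hausdist A B < ereal e1 \<longrightarrow> B \<in> U1"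
      "e2 > 0" "\<forall>B\<in>\<C>. ext_hausdist A B < ereal e2 \<longrightarrow> B \<in> U2"
      using near12 unfolding near_def by blast
    then show ?thesis
      unfolding near_def by (intro exI[of _ "min e1 e2"]) auto
  qed
  have "istopology (\<lambda>U. U \<subseteq> \<C> \<and> (\<forall>A\<in>U. near U A))"
    unfolding istopology_def
  proof (intro conjI allI impI ballI)
    fix U1 U2 A assume "U1 \<subseteq> \<C> \<and> (\<forall>A\<in>U1. near U1 A)" "U2 \<subseteq> \<C> \<and> (\<forall>A\<in>U2. near U2 A)"
      "A \<in> U1 \<inter> U2"
    then show "near (U1 \<inter> U2) A" by (simp add: near_Int)
  next
    fix K A assume "\<forall>U\<in>K. U \<subseteq> \<C> \<and> (\<forall>A\<in>U. near U A)" "A \<in> \<Union>K"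
    then show "near (\<Union>K) A" by (meson UnionE Union_upper near_mono)
  qed auto
  then show ?thesis
    unfolding hausdorff_topology_def near_def by (simp add: topology_inverse')
qed

lemma ext_hausdist_less_imp_close:
  assumes "ext_hausdist A B < ereal e" "p \<in> A"
  obtains q where "q \<in> B" "dist p q < e"
proof -
  have "(INF q\<in>B. ereal (dist p q)) \<le> (SUP a\<in>A. INF q\<in>B. ereal (dist a q))"
    using assms(2) by (rule SUP_upper)
  also have "\<dots> < ereal e"
    using assms(1) by (simp add: ext_hausdist_def)
  finally show ?thesis
    using that by (auto simp: INF_less_iff)
qed

lemma openin_hausdorff_topology_bounded_excess:
  "openin (hausdorff_topology \<C>) {B \<in> \<C>. \<exists>M. \<forall>p\<in>A. \<exists>q\<in>B. dist p q \<le> M}"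
  unfolding openin_hausdorff_topology
proof (intro conjI subsetI ballI exI[of _ "1::real"] impI)
  fix B B'
  assume "B \<in> {B \<in> \<C>. \<exists>M. \<forall>p\<in>A. \<exists>q\<in>B. dist p q \<le> M}" "B' \<in> \<C>"
    and close: "ext_hausdist B B' < ereal 1"
  then obtain M where M: "\<forall>p\<in>A. \<exists>q\<in>B. dist p q \<le> M" by blast
  have "\<exists>r\<in>B'. dist p r \<le> M + 1" if "p \<in> A" for p
  proof -
    obtain q where q: "q \<in> B" "dist p q \<le> M" using M \<open>p \<in> A\<close> by blast
    obtain r where "r \<in> B'" "dist q r < 1"
      using ext_hausdist_less_imp_close[OF close q(1)] by blast
    then show ?thesis using q dist_triangle[of p r q] by force
  qed
  then show "B' \<in> {B \<in> \<C>. \<exists>M. \<forall>p\<in>A. \<exists>q\<in>B. dist p q \<le> M}"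
    using \<open>B' \<in> \<C>\<close> by blast
qed auto

lemma mult_le_mult_nonpos:
  fixes a b u v :: "'a::ordered_ring"
  assumes "a \<le> u" "u \<le> 0" "b \<le> v" "v \<le> 0"
  shows "u * v \<le> a * b"
  using assms by (meson mult_left_mono_neg mult_right_mono_neg order_trans)

lemma dist_triple_le:
  fixes a b c a' b' c' :: real
  shows "dist (a, b, c) (a', b', c') \<le> \<bar>a - a'\<bar> + \<bar>b - b'\<bar> + \<bar>c - c'\<bar>"
proof -
  have "dist (a, b, c) (a', b', c') \<le> dist (a, b, c) (a', b, c) + dist (a', b, c) (a', b', c')"
    by (rule dist_triangle)
  also have "dist (a', b, c) (a', b', c') \<le> dist (a', b, c) (a', b', c) + dist (a', b', c) (a', b', c')"
    by (rule dist_triangle)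
  finally show ?thesis
    by (simp add: dist_Pair_Pair dist_real_def)
qed

lemma abs_le_dist_triple:
  fixes p q :: "real \<times> real \<times> real"
  shows "\<bar>fst p - fst q\<bar> \<le> dist p q" "\<bar>fst (snd p) - fst (snd q)\<bar> \<le> dist p q"
    "\<bar>snd (snd p) - snd (snd q)\<bar> \<le> dist p q"
  using dist_fst_le[of p q] dist_snd_le[of p q] dist_fst_le[of "snd p" "snd q"]
    dist_snd_le[of "snd p" "snd q"]
  by (auto simp: dist_real_def)

lemma closed_le_triple: "closed {p :: (real \<times> real \<times> real) \<times> (real \<times> real \<times> real). fst p \<le> snd p}"
proof -
  have "{p :: (real \<times> real \<times> real) \<times> (real \<times> real \<times> real). fst p \<le> snd p} =
      {p. fst (fst p) \<le> fst (snd p)} \<inter> {p. fst (snd (fst p)) \<le> fst (snd (snd p))}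
      \<inter> {p. snd (snd (fst p)) \<le> snd (snd (snd p))}"
    by (auto simp: less_eq_prod_def)
  also have "closed \<dots>"
    by (intro closed_Int closed_Collect_le continuous_intros)
  finally show ?thesis .
qed

lemma pospace_top_of_set_triple: "pospace (top_of_set (S :: (real \<times> real \<times> real) set))"
proof -
  have "{(x, y). x \<in> S \<and> y \<in> S \<and> x \<le> y} = (S \<times> S) \<inter> {p. fst p \<le> snd p}"
    by auto
  then show ?thesis
    using closed_le_triple by (auto simp: pospace_def closedin_closed)
qed

lemma closedin_down_in_triple:
  "closedin (top_of_set S) (down_in S (x :: real \<times> real \<times> real))"
proof -
  have "down_in S x = S \<inter> {p. fst p \<le> fst x} \<inter> {p. fst (snd p) \<le> fst (snd x)}
      \<inter> {p. snd (snd p) \<le> snd (snd x)}"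
    by (auto simp: down_in_def less_eq_prod_def)
  moreover have "closed ({p. fst p \<le> fst x} \<inter> {p. fst (snd p) \<le> fst (snd x)}
      \<inter> {p :: real \<times> real \<times> real. snd (snd p) \<le> snd (snd x)})"
    by (intro closed_Int closed_Collect_le continuous_intros)
  ultimately show ?thesis
    by (auto simp: closedin_closed Int_assoc)
qed

lemma closed_up_set_triple:
  assumes "compact D"
  shows "closed {x :: real \<times> real \<times> real. \<exists>q\<in>D. q \<le> x}"
proof -
  have "{x. \<exists>q\<in>D. q \<le> x} = (\<Union>q\<in>D. \<Union>c\<in>{c :: real \<times> real \<times> real. 0 \<le> c}. {q + c})"
  proof (intro equalityI subsetI)
    fix x assume "x \<in> {x. \<exists>q\<in>D. q \<le> x}"
    then obtain q where "q \<in> D" "q \<le> x" by blast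
    then show "x \<in> (\<Union>q\<in>D. \<Union>c\<in>{c. 0 \<le> c}. {q + c})"
      by (intro UN_I[of q] UN_I[of "x - q"]) (auto simp: less_eq_prod_def)
  next
    fix x assume "x \<in> (\<Union>q\<in>D. \<Union>c\<in>{c. 0 \<le> c}. {q + c})"
    then obtain q c where "q \<in> D" "0 \<le> c" "x = q + c" by blast
    then show "x \<in> {x. \<exists>q\<in>D. q \<le> x}"
      by (intro CollectI bexI[of _ q]) (auto simp: less_eq_prod_def)
  qed
  moreover have "closed {c :: real \<times> real \<times> real. 0 \<le> c}"
  proof -
    have "{c :: real \<times> real \<times> real. 0 \<le> c} =
        {c. 0 \<le> fst c} \<inter> {c. 0 \<le> fst (snd c)} \<inter> {c. 0 \<le> snd (snd c)}"
      by (auto simp: less_eq_prod_def)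
    also have "closed \<dots>"
      by (intro closed_Int closed_Collect_le continuous_intros)
    finally show ?thesis .
  qed
  ultimately show ?thesis
    using compact_closed_sums[OF assms] by simp
qed

section \<open>The space X: closedness, meets and order intervals\<close>

lemma mem_Xset [simp]: "(u, v, w) \<in> Xset \<longleftrightarrow> u \<le> 0 \<and> v \<le> 0 \<and> w \<le> 0 \<and> u * v + w \<le> 1"
  by (auto simp: Xset_def)

lemma closed_Xset: "closed Xset"
proof -
  have "Xset = {p. fst p \<le> 0} \<inter> {p. fst (snd p) \<le> 0} \<inter> {p. snd (snd p) \<le> 0}
      \<inter> {p. fst p * fst (snd p) + snd (snd p) \<le> 1}"
    by (auto simp: Xset_def)
  also have "closed \<dots>"
    by (intro closed_Int closed_Collect_le continuous_intros)
  finally show ?thesis .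
qed

text \<open>On the negative octant, \<open>down_proj p\<close> is the greatest point of X below p.\<close>

definition down_proj :: "real \<times> real \<times> real \<Rightarrow> real \<times> real \<times> real" where
  "down_proj p = (fst p, fst (snd p), min (snd (snd p)) (1 - fst p * fst (snd p)))"

lemma down_proj_Pair [simp]: "down_proj (u, v, w) = (u, v, min w (1 - u * v))"
  by (simp add: down_proj_def)

lemma down_proj_le: "down_proj p \<le> p"
  by (cases p) auto

lemma down_proj_mem_Xset: "u \<le> 0 \<Longrightarrow> v \<le> 0 \<Longrightarrow> w \<le> 0 \<Longrightarrow> down_proj (u, v, w) \<in> Xset"
  by (auto simp: min_def)

lemma le_down_proj:
  assumes "q \<in> Xset" "q \<le> (u, v, w)" "u \<le> 0" "v \<le> 0"
  shows "q \<le> down_proj (u, v, w)"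
proof -
  obtain u' v' w' where q: "q = (u', v', w')" by (cases q)
  have "u * v \<le> u' * v'"
    using assms by (intro mult_le_mult_nonpos) (auto simp: q)
  then show ?thesis using assms by (auto simp: q)
qed

lemma is_inf_in_Xset:
  assumes "x \<in> Xset" "y \<in> Xset"
  shows "is_inf_in Xset x y (down_proj (inf x y))"
proof -
  obtain a b c a' b' c' where xy: "x = (a, b, c)" "y = (a', b', c')"
    by (cases x, cases y)
  have inf: "inf x y = (min a a', min b b', min c c')"
    by (simp add: xy inf_min)
  have "z \<le> down_proj (inf x y)" if "z \<in> Xset" "z \<le> x" "z \<le> y" for z
    unfolding inf using that assms by (intro le_down_proj) (auto simp: xy less_eq_prod_def)
  moreover have "down_proj (inf x y) \<le> x" "down_proj (inf x y) \<le> y"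
    using down_proj_le[of "inf x y"] by (simp_all add: le_inf_iff)
  moreover have "down_proj (inf x y) \<in> Xset"
    unfolding inf using assms by (intro down_proj_mem_Xset) (auto simp: xy)
  ultimately show ?thesis
    by (simp add: is_inf_in_def)
qed

lemma meet_in_Xset:
  assumes "x \<in> Xset" "y \<in> Xset"
  shows "meet_in Xset x y = down_proj (inf x y)"
  unfolding meet_in_def
proof (rule the_equality)
  show "is_inf_in Xset x y (down_proj (inf x y))"
    using assms by (rule is_inf_in_Xset)
  then show "z = down_proj (inf x y)" if "is_inf_in Xset x y z" for z
    using that unfolding is_inf_in_def by (meson order_antisym)
qed

lemma top_meet_semilattice_Xset: "top_meet_semilattice (top_of_set Xset)"
proof -
  have "continuous_on UNIV (\<lambda>p :: (real \<times> real \<times> real) \<times> (real \<times> real \<times> real).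
      down_proj (inf (fst p) (snd p)))"
    unfolding down_proj_def by (simp add: inf_min continuous_intros)
  then have "continuous_map (top_of_set (Xset \<times> Xset)) (top_of_set Xset)
      (\<lambda>p. down_proj (inf (fst p) (snd p)))"
    using is_inf_in_Xset
    by (auto simp: continuous_map_in_subtopology is_inf_in_def intro: continuous_on_subset)
  then have "continuous_map (prod_topology (top_of_set Xset) (top_of_set Xset)) (top_of_set Xset)
      (\<lambda>(x, y). meet_in Xset x y)"
    unfolding prod_topology_subtopology_eu
    by (rule continuous_map_eq) (auto simp: meet_in_Xset)
  moreover have "\<forall>x\<in>Xset. \<forall>y\<in>Xset. \<exists>z. is_inf_in Xset x y z"
    using is_inf_in_Xset by blast
  ultimately show ?thesis
    using pospace_top_of_set_triple by (simp add: top_meet_semilattice_def)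
qed

lemma Xset_interval_bottom_box:
  assumes x: "(a, b, c) \<in> Xset" and y: "(a', b', c') \<in> Xset" and le: "(a, b, c) \<le> (a', b', c')"
  shows "{a..a'} \<times> {b..b'} \<times> {c} \<subseteq> {z \<in> Xset. (a, b, c) \<le> z \<and> z \<le> (a', b', c')}"
proof
  fix p assume "p \<in> {a..a'} \<times> {b..b'} \<times> {c}"
  then obtain u v where p: "p = (u, v, c)" "a \<le> u" "u \<le> a'" "b \<le> v" "v \<le> b'"
    by auto
  have "u * v \<le> a * b"
    using p y by (intro mult_le_mult_nonpos) auto
  then show "p \<in> {z \<in> Xset. (a, b, c) \<le> z \<and> z \<le> (a', b', c')}"
    using p x y le by auto
qed

text \<open>Each point of the interval is joined by a vertical segment to its bottom box.\<close>

lemma connected_Xset_interval: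
  assumes x: "(a, b, c) \<in> Xset" and y: "(a', b', c') \<in> Xset" and le: "(a, b, c) \<le> (a', b', c')"
  shows "connected {z \<in> Xset. (a, b, c) \<le> z \<and> z \<le> (a', b', c')}"
proof -
  let ?I = "{z \<in> Xset. (a, b, c) \<le> z \<and> z \<le> (a', b', c')}"
  let ?B = "{a..a'} \<times> {b..b'} \<times> {c}"
  define P where "P z = ?B \<union> {fst z} \<times> {fst (snd z)} \<times> {c..snd (snd z)}" for z
  have B: "?B \<subseteq> ?I"
    using x y le by (rule Xset_interval_bottom_box)
  have "?I = (\<Union>z\<in>?I. P z)"
  proof (intro equalityI subsetI)
    fix z assume "z \<in> ?I"
    then show "z \<in> (\<Union>z\<in>?I. P z)"
      by (intro UN_I[of z]; cases z) (auto simp: P_def)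
  next
    fix p assume "p \<in> (\<Union>z\<in>?I. P z)"
    then obtain u v w where z: "(u, v, w) \<in> ?I" "p \<in> P (u, v, w)" by auto
    then show "p \<in> ?I"
    proof (cases "p \<in> ?B")
      case False
      with z obtain t where "p = (u, v, t)" "c \<le> t" "t \<le> w"
        by (auto simp: P_def)
      with z show ?thesis by auto
    qed (use B in blast)
  qed
  moreover have "connected (\<Union>z\<in>?I. P z)"
  proof (rule connected_Union)
    fix S assume "S \<in> P ` ?I"
    then obtain u v w where S: "S = P (u, v, w)" and "(u, v, w) \<in> ?I"
      by auto
    then have "(u, v, c) \<in> ?B \<inter> {u} \<times> {v} \<times> {c..w}"
      by auto
    moreover have "connected ?B" "connected ({u} \<times> {v} \<times> {c..w})"
      by (intro convex_connected convex_Times convex_real_interval convex_singleton)+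
    ultimately show "connected S"
      unfolding S P_def fst_conv snd_conv by (intro connected_Un) blast+
  next
    have "(a, b, c) \<in> \<Inter>(P ` ?I)"
      using le by (auto simp: P_def)
    then show "\<Inter>(P ` ?I) \<noteq> {}" by blast
  qed
  ultimately show ?thesis by simp
qed

lemma order_connected_Xset: "order_connected (top_of_set Xset)"
  unfolding order_connected_def
proof (intro ballI impI)
  fix x y assume "x \<in> topspace (top_of_set Xset)" "y \<in> topspace (top_of_set Xset)" "x \<le> y"
  moreover obtain a b c a' b' c' where "x = (a, b, c)" "y = (a', b', c')"
    by (cases x, cases y)
  ultimately have "connected (up_in Xset x \<inter> down_in Xset y)"
    using connected_Xset_interval by (simp add: up_in_def down_in_def Collect_conj_eq Int_ac)
  then show "connectedin (top_of_set Xset)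
      (up_in (topspace (top_of_set Xset)) x \<inter> down_in (topspace (top_of_set Xset)) y)"
    by (auto simp: connectedin_subtopology up_in_def down_in_def)
qed

section \<open>Fell continuity of the down-set map\<close>

lemma compactin_Xset_above_not_below:
  "compactin (top_of_set Xset)
     ({p \<in> Xset. (a, b, c) \<le> p} - {p. fst p < a' \<and> fst (snd p) < b' \<and> snd (snd p) < c'})"
proof -
  have "{p \<in> Xset. (a, b, c) \<le> p} =
      Xset \<inter> {p. a \<le> fst p} \<inter> {p. b \<le> fst (snd p)} \<inter> {p. c \<le> snd (snd p)}"
    by (auto simp: less_eq_prod_def)
  also have "closed \<dots>"
    by (intro closed_Int closed_Xset closed_Collect_le continuous_intros)
  finally have "closed ({p \<in> Xset. (a, b, c) \<le> p} -
      {p. fst p < a' \<and> fst (snd p) < b' \<and> snd (snd p) < c'})"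
    by (intro closed_Diff open_Collect_conj open_Collect_less continuous_intros)
  moreover have "{p \<in> Xset. (a, b, c) \<le> p} \<subseteq> {a..0} \<times> {b..0} \<times> {c..0}"
    by (auto simp: Xset_def less_eq_prod_def)
  moreover have "bounded ({a..0} \<times> {b..0} \<times> {c..0})"
    by (intro bounded_Times) auto
  ultimately show ?thesis
    by (auto simp: compactin_subtopology compact_eq_bounded_closed intro: bounded_subset)
qed

lemma openin_Xset_lower_point:
  assumes V: "openin (top_of_set Xset) V" and abc: "(a, b, c) \<in> V"
  obtains d q where "d > 0" "q \<in> V" "q \<le> (a - d, b - d, c - d)"
proof -
  obtain e where e: "e > 0" "\<And>y. y \<in> Xset \<Longrightarrow> dist y (a, b, c) < e \<Longrightarrow> y \<in> V"
    using V abc unfolding openin_euclidean_subtopology_iff by meson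
  have "(a, b, c) \<in> Xset"
    using V abc openin_imp_subset by blast
  then have x: "a \<le> 0" "b \<le> 0" "c \<le> 0" "a * b + c \<le> 1"
    by auto
  define K where "K = 2 - a - b"
  define d where "d = min 1 (e / (2 * (K + 2)))"
  have K: "K \<ge> 2" using x by (simp add: K_def)
  have d: "0 < d" "d \<le> 1"
    using e K by (auto simp: d_def)
  have "(K + 2) * d \<le> (K + 2) * (e / (2 * (K + 2)))"
    using K by (intro mult_left_mono) (auto simp: d_def)
  also have "\<dots> = e / 2"
    using K by (simp add: field_simps)
  finally have dist_bound: "(K + 2) * d \<le> e / 2" .
  let ?q = "(a - d, b - d, c - K * d)"
  \<comment> \<open>Lowering w by K d more than compensates the growth d (- a - b + d) of the product u v.\<close>
  have "(a - d) * (b - d) + (c - K * d) = a * b + c - d * (2 - d)"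
    by (simp add: K_def algebra_simps)
  moreover have "d * (2 - d) \<ge> 0" "K * d \<ge> d"
    using d K by simp_all
  ultimately have "?q \<in> Xset"
    unfolding mem_Xset using x d by (intro conjI; linarith)
  moreover have "dist ?q (a, b, c) \<le> (K + 2) * d"
    using dist_triple_le[of "a - d" "b - d" "c - K * d" a b c] d K by (simp add: algebra_simps)
  ultimately have "?q \<in> V"
    using e dist_bound by auto
  moreover have "?q \<le> (a - d, b - d, c - d)"
    using \<open>K * d \<ge> d\<close> by simp
  ultimately show ?thesis
    using that d(1) by blast
qed

lemma openin_down_hits:
  assumes V: "openin (top_of_set Xset) V"
  shows "openin (top_of_set Xset) {x \<in> Xset. down_in Xset x \<inter> V \<noteq> {}}"
  unfolding openin_euclidean_subtopology_iff
proof (intro conjI ballI)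
  fix x assume "x \<in> {x \<in> Xset. down_in Xset x \<inter> V \<noteq> {}}"
  then obtain a b c where x: "x \<in> Xset" "(a, b, c) \<in> V" "(a, b, c) \<le> x"
    by (auto simp: down_in_def)
  obtain d q where d: "d > 0" "q \<in> V" "q \<le> (a - d, b - d, c - d)"
    using openin_Xset_lower_point[OF V x(2)] by blast
  have "y \<in> {x \<in> Xset. down_in Xset x \<inter> V \<noteq> {}}" if y: "y \<in> Xset" "dist y x < d" for y
  proof -
    obtain y1 y2 y3 x1 x2 x3 where xy: "y = (y1, y2, y3)" "x = (x1, x2, x3)"
      by (cases y, cases x)
    have "\<bar>y1 - x1\<bar> < d" "\<bar>y2 - x2\<bar> < d" "\<bar>y3 - x3\<bar> < d"
      using abs_le_dist_triple[of y x] y(2) unfolding xy fst_conv snd_conv by linarith+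
    then have "q \<le> y"
      using d(3) x(3) xy by (cases q) auto
    moreover have "q \<in> Xset"
      using d(2) V openin_imp_subset by blast
    ultimately show ?thesis
      using y(1) d(2) by (auto simp: down_in_def)
  qed
  then show "\<exists>d>0. \<forall>y\<in>Xset. dist y x < d \<longrightarrow> y \<in> {x \<in> Xset. down_in Xset x \<inter> V \<noteq> {}}"
    using d(1) by blast
qed auto

lemma openin_down_misses:
  assumes "compactin (top_of_set Xset) D"
  shows "openin (top_of_set Xset) {x \<in> Xset. down_in Xset x \<inter> D = {}}"
proof -
  have D: "compact D" "D \<subseteq> Xset"
    using assms by (auto simp: compactin_subtopology)
  then have "{x \<in> Xset. down_in Xset x \<inter> D = {}} = Xset - Xset \<inter> {x. \<exists>q\<in>D. q \<le> x}"
    by (auto simp: down_in_def)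
  moreover have "closedin (top_of_set Xset) (Xset \<inter> {x. \<exists>q\<in>D. q \<le> x})"
    using closed_up_set_triple[OF D(1)] by (auto simp: closedin_closed)
  ultimately show ?thesis
    by (simp add: openin_diff)
qed

lemma down_in_Xset_mem_closed_sets: "down_in Xset x \<in> closed_sets (top_of_set Xset)"
  by (simp add: closed_sets_def closedin_down_in_triple)

lemma continuous_map_down_in_fell:
  "continuous_map (top_of_set Xset) (fell_topology (top_of_set Xset)) (down_in Xset)"
  unfolding fell_topology_def
proof (rule continuous_on_generated_topo)
  fix S
  assume "S \<in> {{A \<in> closed_sets (top_of_set Xset). A \<inter> V \<noteq> {}} |V. openin (top_of_set Xset) V} \<union>
    {{A \<in> closed_sets (top_of_set Xset). A \<inter> D = {}} |D. compactin (top_of_set Xset) D}"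
  then consider V where "openin (top_of_set Xset) V" "S = {A \<in> closed_sets (top_of_set Xset). A \<inter> V \<noteq> {}}"
    | D where "compactin (top_of_set Xset) D" "S = {A \<in> closed_sets (top_of_set Xset). A \<inter> D = {}}"
    by blast
  then show "openin (top_of_set Xset) (down_in Xset -` S \<inter> topspace (top_of_set Xset))"
  proof cases
    case 1
    then show ?thesis
      using openin_down_hits[OF 1(1)] down_in_Xset_mem_closed_sets
      by (simp add: Int_commute Collect_conj_eq vimage_def)
  next
    case 2
    then show ?thesis
      using openin_down_misses[OF 2(1)] down_in_Xset_mem_closed_sets
      by (simp add: Int_commute Collect_conj_eq vimage_def)
  qed
next
  show "down_in Xset ` topspace (top_of_set Xset) \<subseteq>
      \<Union> ({{A \<in> closed_sets (top_of_set Xset). A \<inter> V \<noteq> {}} |V. openin (top_of_set Xset) V} \<union>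
      {{A \<in> closed_sets (top_of_set Xset). A \<inter> D = {}} |D. compactin (top_of_set Xset) D})"
    using topspace_fell_topology[of "top_of_set Xset"] down_in_Xset_mem_closed_sets
    unfolding fell_topology_def topology_generated_by_topspace by blast
qed

lemma fell_nbhd_down_in:
  assumes x: "x \<in> Xset" and e: "e > 0"
  obtains W where "openin (fell_topology (top_of_set Xset)) W" "down_in Xset x \<in> W"
    "\<And>y. y \<in> Xset \<Longrightarrow> down_in Xset y \<in> W \<Longrightarrow> dist y x < e"
proof -
  obtain a b c where abc: "x = (a, b, c)" by (cases x)
  define d where "d = e / 4"
  have d: "d > 0" using e by (simp add: d_def)
  define V where "V = Xset \<inter> ball x d"
  \<comment> \<open>Meeting V forces y > x - d componentwise; missing D then forces y < x + d.\<close>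
  define D where "D = {p \<in> Xset. (a - d, b - d, c - d) \<le> p} -
    {p. fst p < a + d \<and> fst (snd p) < b + d \<and> snd (snd p) < c + d}"
  define W where "W = {A \<in> closed_sets (top_of_set Xset). A \<inter> V \<noteq> {}} \<inter>
    {A \<in> closed_sets (top_of_set Xset). A \<inter> D = {}}"
  have "compactin (top_of_set Xset) D"
    unfolding D_def by (rule compactin_Xset_above_not_below)
  moreover have "openin (top_of_set Xset) V"
    by (simp add: V_def openin_open_Int)
  ultimately have "openin (fell_topology (top_of_set Xset)) W"
    unfolding W_def fell_topology_def openin_topology_generated_by_iff
    by (intro generate_topology_on.Int generate_topology_on.Basis) blast+
  moreover have "down_in Xset x \<in> W"
  proof -
    have "x \<in> down_in Xset x \<inter> V"
      using x d by (simp add: down_in_def V_def)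
    moreover have "down_in Xset x \<inter> D = {}"
      using d by (auto simp: down_in_def D_def abc)
    ultimately show ?thesis
      using down_in_Xset_mem_closed_sets by (auto simp: W_def)
  qed
  moreover have "dist y x < e" if y: "y \<in> Xset" "down_in Xset y \<in> W" for y
  proof -
    obtain y1 y2 y3 where y123: "y = (y1, y2, y3)" by (cases y)
    obtain q where q: "q \<in> V" "q \<le> y"
      using y(2) by (auto simp: W_def down_in_def)
    have "\<bar>fst q - a\<bar> < d" "\<bar>fst (snd q) - b\<bar> < d" "\<bar>snd (snd q) - c\<bar> < d"
      using abs_le_dist_triple[of q x] q(1) by (auto simp: V_def abc dist_commute)
    with q(2) have lower: "a - d \<le> y1" "b - d \<le> y2" "c - d \<le> y3"
      by (cases q; auto simp: y123)+
    have "y \<notin> D"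
      using y by (auto simp: W_def down_in_def)
    then have "y1 < a + d" "y2 < b + d" "y3 < c + d"
      using y(1) lower by (auto simp: D_def y123)
    then have "dist y x \<le> 3 * d"
      using dist_triple_le[of y1 y2 y3 a b c] lower by (simp add: y123 abc)
    then show ?thesis
      using d by (simp add: d_def)
  qed
  ultimately show ?thesis
    using that by blast
qed

lemma open_map_down_in_fell:
  "open_map (top_of_set Xset) (subtopology (fell_topology (top_of_set Xset)) (down_sets (top_of_set Xset)))
     (down_in Xset)"
  unfolding open_map_def
proof (intro allI impI)
  fix U assume U: "openin (top_of_set Xset) U"
  show "openin (subtopology (fell_topology (top_of_set Xset)) (down_sets (top_of_set Xset)))
      (down_in Xset ` U)"
  proof (subst openin_subopen, intro ballI)
    fix B assume "B \<in> down_in Xset ` U"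
    then obtain x where x: "x \<in> U" "B = down_in Xset x" by blast
    then have "x \<in> Xset" using U openin_imp_subset by blast
    obtain e where e: "e > 0" "\<And>y. y \<in> Xset \<Longrightarrow> dist y x < e \<Longrightarrow> y \<in> U"
      using U x(1) unfolding openin_euclidean_subtopology_iff by meson
    obtain W where W: "openin (fell_topology (top_of_set Xset)) W" "down_in Xset x \<in> W"
      "\<And>y. y \<in> Xset \<Longrightarrow> down_in Xset y \<in> W \<Longrightarrow> dist y x < e"
      using fell_nbhd_down_in[OF \<open>x \<in> Xset\<close> e(1)] by blast
    have "W \<inter> down_sets (top_of_set Xset) \<subseteq> down_in Xset ` U"
      using W(3) e(2) by (auto simp: down_sets_def)
    moreover have "B \<in> W \<inter> down_sets (top_of_set Xset)"
      using W(2) x \<open>x \<in> Xset\<close> by (simp add: down_sets_def)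
    ultimately show "\<exists>T. openin (subtopology (fell_topology (top_of_set Xset))
        (down_sets (top_of_set Xset))) T \<and> B \<in> T \<and> T \<subseteq> down_in Xset ` U"
      using W(1) by (auto simp: openin_subtopology)
  qed
qed

lemma homeomorphic_map_down_in_fell:
  "homeomorphic_map (top_of_set Xset)
     (subtopology (fell_topology (top_of_set Xset)) (down_sets (top_of_set Xset))) (down_in Xset)"
proof (rule bijective_open_imp_homeomorphic_map)
  show "continuous_map (top_of_set Xset)
      (subtopology (fell_topology (top_of_set Xset)) (down_sets (top_of_set Xset))) (down_in Xset)"
    using continuous_map_down_in_fell by (auto simp: continuous_map_in_subtopology down_sets_def)
  show "down_in Xset ` topspace (top_of_set Xset) =
      topspace (subtopology (fell_topology (top_of_set Xset)) (down_sets (top_of_set Xset)))"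
    using down_in_Xset_mem_closed_sets by (auto simp: topspace_fell_topology down_sets_def)
  show "inj_on (down_in Xset) (topspace (top_of_set Xset))"
  proof (rule inj_onI)
    fix x y assume "x \<in> topspace (top_of_set Xset)" "y \<in> topspace (top_of_set Xset)"
      "down_in Xset x = down_in Xset y"
    then show "x = y"
      using down_in_subset_down_in_iff[of x Xset y] down_in_subset_down_in_iff[of y Xset x] by simp
  qed
qed (rule open_map_down_in_fell)

section \<open>Hausdorff and Vietoris continuity of the down-set map\<close>

lemma unbounded_excess_down_in:
  assumes x: "(a, b, c) \<in> Xset" and t: "t > 0"
  shows "\<exists>p\<in>down_in Xset (a, b, c). \<forall>q\<in>Xset. fst q \<le> a - t \<longrightarrow> M < dist p q"
proof -
  have x': "a \<le> 0" "b \<le> 0" "c \<le> 0" "a * b + c \<le> 1"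
    using x by auto
  define v where "v = min b ((a * M - t * M + c - M - 2) / t)"
  have v: "v \<le> b" "t * v \<le> a * M - t * M + c - M - 2"
    using t by (auto simp: v_def field_simps min_def)
  have "a * v \<ge> 0"
    using x' v by (simp add: mult_nonpos_nonpos)
  then have p: "(a, v, c - a * v) \<in> down_in Xset (a, b, c)"
    using x' v by (auto simp: down_in_def)
  have "M < dist (a, v, c - a * v) q" if q: "q \<in> Xset" "fst q \<le> a - t" for q
  proof (rule ccontr)
    assume "\<not> M < dist (a, v, c - a * v) q"
    moreover obtain u' v' w' where q': "q = (u', v', w')" by (cases q)
    ultimately have "\<bar>v - v'\<bar> \<le> M" "\<bar>c - a * v - w'\<bar> \<le> M"
      using abs_le_dist_triple[of "(a, v, c - a * v)" q] by auto
    then have close: "v' \<le> v + M" "c - a * v - M \<le> w'"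
      by linarith+
    have q'': "u' \<le> a - t" "v' \<le> 0" "u' * v' + w' \<le> 1"
      using q by (auto simp: q')
    have "(a - t) * v' \<le> u' * v'"
      using q'' by (simp add: mult_right_mono_neg)
    moreover have "a * (v + M) \<le> a * v'" "t * v' \<le> t * (v + M)"
      using close x' t by (simp_all add: mult_left_mono_neg)
    moreover have "(a - t) * v' = a * v' - t * v'" "a * (v + M) = a * v + a * M"
      "t * (v + M) = t * v + t * M"
      by (simp_all add: algebra_simps)
    ultimately show False
      using close q'' v(2) by linarith
  qed
  then show ?thesis
    using p by blast
qed

lemma Xset_shift_down:
  assumes x: "(a, b, c) \<in> Xset" and t: "0 < t" "t \<le> 1"
  shows "(a - t, b - t, c - t * (1 - a - b)) \<in> Xset"
    and "dist (a - t, b - t, c - t * (1 - a - b)) (a, b, c) \<le> t * (3 - a - b)"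
proof -
  have x': "a \<le> 0" "b \<le> 0" "c \<le> 0" "a * b + c \<le> 1"
    using x by auto
  have shift_nonneg: "t * (1 - t) \<ge> 0" "t * (1 - a - b) \<ge> 0"
    using t x' by simp_all
  have "(a - t) * (b - t) + (c - t * (1 - a - b)) = a * b + c - t * (1 - t)"
    by (simp add: algebra_simps)
  then show "(a - t, b - t, c - t * (1 - a - b)) \<in> Xset"
    unfolding mem_Xset using x' t shift_nonneg by (intro conjI; linarith)
  have "dist (a - t, b - t, c - t * (1 - a - b)) (a, b, c)
      \<le> \<bar>a - t - a\<bar> + \<bar>b - t - b\<bar> + \<bar>c - t * (1 - a - b) - c\<bar>"
    by (rule dist_triple_le)
  also have "\<dots> = t + t + t * (1 - a - b)"
    using t shift_nonneg by simp
  finally show "dist (a - t, b - t, c - t * (1 - a - b)) (a, b, c) \<le> t * (3 - a - b)"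
    by (simp add: algebra_simps)
qed

lemma not_continuous_at_down_in_hausdorff:
  assumes x: "x \<in> Xset"
  shows "\<not> continuous_at_pt (top_of_set Xset) (hausdorff_topology (down_sets (top_of_set Xset)))
    (down_in Xset) x"
proof
  assume cont: "continuous_at_pt (top_of_set Xset)
    (hausdorff_topology (down_sets (top_of_set Xset))) (down_in Xset) x"
  obtain a b c where abc: "x = (a, b, c)" by (cases x)
  let ?V = "{B \<in> down_sets (top_of_set Xset). \<exists>M. \<forall>p\<in>down_in Xset x. \<exists>q\<in>B. dist p q \<le> M}"
  have "down_in Xset x \<in> ?V"
    using x by (auto simp: down_sets_def intro!: exI[of _ 0])
  moreover have "openin (hausdorff_topology (down_sets (top_of_set Xset))) ?V"
    by (rule openin_hausdorff_topology_bounded_excess)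
  ultimately obtain U where U: "openin (top_of_set Xset) U" "x \<in> U" "down_in Xset ` U \<subseteq> ?V"
    using cont unfolding continuous_at_pt_def by blast
  then obtain e where e: "e > 0" "\<And>y. y \<in> Xset \<Longrightarrow> dist y x < e \<Longrightarrow> y \<in> U"
    unfolding openin_euclidean_subtopology_iff by meson
  define K where "K = 3 - a - b"
  define t where "t = min 1 (e / (2 * K))"
  have K: "K \<ge> 3"
    using x by (simp add: K_def abc)
  have t: "0 < t" "t \<le> 1" "t * K \<le> e / 2"
    using e K by (auto simp: t_def min_def field_simps)
  let ?y = "(a - t, b - t, c - t * (1 - a - b))"
  have "?y \<in> U"
    using Xset_shift_down[OF x[unfolded abc] t(1,2)] t(3) e unfolding K_def abc by simp
  then obtain M where M: "\<forall>p\<in>down_in Xset x. \<exists>q\<in>down_in Xset ?y. dist p q \<le> M"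
    using U(3) by blast
  obtain p where p: "p \<in> down_in Xset x" "\<forall>q\<in>Xset. fst q \<le> a - t \<longrightarrow> M < dist p q"
    using unbounded_excess_down_in[OF x[unfolded abc] t(1)] abc by blast
  then obtain q where "q \<in> down_in Xset ?y" "dist p q \<le> M"
    using M by blast
  then show False
    using p(2) by (auto simp: down_in_def less_eq_prod_def)
qed

lemma continuous_at_down_in_vietoris_origin:
  "continuous_at_pt (top_of_set Xset) (subtopology (vietoris_topology (top_of_set Xset))
     (down_sets (top_of_set Xset))) (down_in Xset) (0, 0, 0)"
  unfolding continuous_at_pt_def
proof (intro conjI allI impI)
  have down_origin: "down_in Xset (0, 0, 0) = Xset"
    by (auto simp: down_in_def Xset_def)
  show "(0, 0, 0) \<in> topspace (top_of_set Xset)"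
    by simp
  then show "down_in Xset (0, 0, 0) \<in> topspace (subtopology (vietoris_topology (top_of_set Xset))
      (down_sets (top_of_set Xset)))"
    using down_in_Xset_mem_closed_sets by (simp add: topspace_vietoris_topology down_sets_def)
  fix \<W>
  assume "openin (subtopology (vietoris_topology (top_of_set Xset)) (down_sets (top_of_set Xset))) \<W>
    \<and> down_in Xset (0, 0, 0) \<in> \<W>"
  then obtain W where W: "openin (vietoris_topology (top_of_set Xset)) W"
    "\<W> = W \<inter> down_sets (top_of_set Xset)" "topspace (top_of_set Xset) \<in> W"
    by (auto simp: openin_subtopology down_origin)
  obtain \<V> where \<V>: "finite \<V>" "\<forall>V\<in>\<V>. openin (top_of_set Xset) V \<and> V \<noteq> {}"
    "\<forall>A\<in>closed_sets (top_of_set Xset). (\<forall>V\<in>\<V>. A \<inter> V \<noteq> {}) \<longrightarrow> A \<in> W"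
    by (rule vietoris_nbhd_of_topspace[OF W(1) W(3)])
  define U where "U = Xset \<inter> \<Inter>((\<lambda>V. {x \<in> Xset. down_in Xset x \<inter> V \<noteq> {}}) ` \<V>)"
  have "openin (top_of_set Xset) {x \<in> Xset. down_in Xset x \<inter> V \<noteq> {}}" if "V \<in> \<V>" for V
    using \<V>(2) that by (intro openin_down_hits) blast
  then have "openin (top_of_set Xset) U"
    unfolding U_def using \<V>(1) by (intro openin_Int_Inter) auto
  moreover have "(0, 0, 0) \<in> U"
    using \<V>(2) openin_imp_subset by (fastforce simp: U_def down_origin)
  moreover have "down_in Xset ` U \<subseteq> \<W>"
    using \<V>(3) down_in_Xset_mem_closed_sets by (auto simp: U_def W(2) down_sets_def)
  ultimately show "\<exists>U. openin (top_of_set Xset) U \<and> (0, 0, 0) \<in> U \<and> down_in Xset ` U \<subseteq> \<W>"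
    by blast
qed

lemma not_continuous_at_down_in_vietoris_escape:
  fixes f g :: "real \<times> real \<times> real \<Rightarrow> real"
  assumes x: "x \<in> Xset"
    and f: "continuous_on UNIV f" "mono f" and g: "continuous_on UNIV g" "\<forall>p\<in>Xset. g p \<le> 0"
    and escape: "\<And>e. e > 0 \<Longrightarrow>
      \<exists>y\<in>Xset. dist y x < e \<and> (\<exists>p\<in>down_in Xset y. 1 \<le> (f p - f x) * (1 - g p))"
  shows "\<not> continuous_at_pt (top_of_set Xset) (subtopology (vietoris_topology (top_of_set Xset))
    (down_sets (top_of_set Xset))) (down_in Xset) x"
proof
  let ?E = "{p \<in> Xset. 1 \<le> (f p - f x) * (1 - g p)}"
  assume cont: "continuous_at_pt (top_of_set Xset) (subtopology (vietoris_topology (top_of_set Xset))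
    (down_sets (top_of_set Xset))) (down_in Xset) x"
  have "closed {p. 1 \<le> (f p - f x) * (1 - g p)}"
    using f(1) g(1) by (intro closed_Collect_le continuous_intros)
  then have "closedin (top_of_set Xset) ?E"
    by (auto simp: closedin_closed Collect_conj_eq)
  moreover have "down_in Xset x \<inter> ?E = {}"
  proof -
    have "(f p - f x) * (1 - g p) \<le> 0" if "p \<in> Xset" "p \<le> x" for p
      using monoD[OF f(2) that(2)] g(2) that(1) by (intro mult_nonpos_nonneg) auto
    then show ?thesis
      by (force simp: down_in_def)
  qed
  ultimately obtain U where U: "openin (top_of_set Xset) U" "x \<in> U"
    "\<And>y. y \<in> U \<Longrightarrow> down_in Xset y \<inter> ?E = {}"
    using continuous_at_pt_vietoris_miss[OF cont] by blast
  then obtain e where e: "e > 0" "\<And>y. y \<in> Xset \<Longrightarrow> dist y x < e \<Longrightarrow> y \<in> U"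
    unfolding openin_euclidean_subtopology_iff by meson
  then obtain y p where y: "y \<in> Xset" "dist y x < e" "p \<in> down_in Xset y"
    "1 \<le> (f p - f x) * (1 - g p)"
    using escape by blast
  then have "p \<in> down_in Xset y \<inter> ?E"
    by (simp add: down_in_def)
  moreover have "y \<in> U"
    using e(2) y(1,2) .
  ultimately show False
    using U(3) by blast
qed

lemma escape_step:
  fixes s e :: real
  assumes "s < 0" "e > 0"
  obtains t where "0 < t" "t < e" "s + t \<le> 0" "\<And>v. v \<le> 1 - 1 / t \<Longrightarrow> 1 \<le> t * (1 - v)"
proof
  let ?t = "min (- s) (e / 2)"
  show "0 < ?t" "?t < e" "s + ?t \<le> 0"
    using assms by auto
  show "1 \<le> ?t * (1 - v)" if "v \<le> 1 - 1 / ?t" for v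
  proof -
    have "?t * (1 / ?t) \<le> ?t * (1 - v)"
      using that \<open>0 < ?t\<close> by (intro mult_left_mono) auto
    then show ?thesis
      using \<open>0 < ?t\<close> by simp
  qed
qed

lemma mono_coordinates_triple:
  "mono (fst :: real \<times> real \<times> real \<Rightarrow> real)" "mono (\<lambda>p :: real \<times> real \<times> real. fst (snd p))"
  "mono (\<lambda>p :: real \<times> real \<times> real. snd (snd p))"
  by (auto simp: mono_def less_eq_prod_def)

lemma continuous_on_coordinates_triple:
  "continuous_on UNIV (fst :: real \<times> real \<times> real \<Rightarrow> real)"
  "continuous_on UNIV (\<lambda>p :: real \<times> real \<times> real. fst (snd p))"
  "continuous_on UNIV (\<lambda>p :: real \<times> real \<times> real. snd (snd p))"
  by (intro continuous_intros)+

text \<open>In each of the three cases one coordinate of x is raised by t; below the new point the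
  other coordinate can be made so negative that the escape inequality holds.\<close>

lemma not_continuous_at_down_in_vietoris_fst:
  assumes x: "(a, b, c) \<in> Xset" and a: "a < 0"
  shows "\<not> continuous_at_pt (top_of_set Xset) (subtopology (vietoris_topology (top_of_set Xset))
    (down_sets (top_of_set Xset))) (down_in Xset) (a, b, c)"
proof (rule not_continuous_at_down_in_vietoris_escape[where f = fst and g = "\<lambda>p. fst (snd p)"])
  fix e :: real assume "e > 0"
  then obtain t where t: "0 < t" "t < e" "a + t \<le> 0" "\<And>v. v \<le> 1 - 1 / t \<Longrightarrow> 1 \<le> t * (1 - v)"
    using escape_step a by metis
  define v where "v = min b (1 - 1 / t)"
  have x': "a \<le> 0" "b \<le> 0" "c \<le> 0" "a * b + c \<le> 1"
    using x by auto
  then have "(a + t) * b \<le> a * b"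
    using t by (simp add: algebra_simps mult_nonpos_nonneg)
  then have "(a + t, b, c) \<in> Xset"
    using t x' by auto
  moreover have "dist (a + t, b, c) (a, b, c) < e"
    using t by (simp add: dist_Pair_Pair dist_real_def)
  moreover have "down_proj (a + t, v, c) \<in> down_in Xset (a + t, b, c)"
    using t x' down_proj_mem_Xset[of "a + t" v c] by (auto simp: down_in_def v_def)
  moreover have "1 \<le> (fst (down_proj (a + t, v, c)) - fst (a, b, c)) *
      (1 - fst (snd (down_proj (a + t, v, c))))"
    using t(4)[of v] by (simp add: v_def)
  ultimately show "\<exists>y\<in>Xset. dist y (a, b, c) < e \<and>
      (\<exists>p\<in>down_in Xset y. 1 \<le> (fst p - fst (a, b, c)) * (1 - fst (snd p)))"
    by blast
qed (use x mono_coordinates_triple continuous_on_coordinates_triple in \<open>auto simp: Xset_def\<close>)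

lemma not_continuous_at_down_in_vietoris_snd:
  assumes x: "(a, b, c) \<in> Xset" and b: "b < 0"
  shows "\<not> continuous_at_pt (top_of_set Xset) (subtopology (vietoris_topology (top_of_set Xset))
    (down_sets (top_of_set Xset))) (down_in Xset) (a, b, c)"
proof (rule not_continuous_at_down_in_vietoris_escape[where f = "\<lambda>p. fst (snd p)" and g = fst])
  fix e :: real assume "e > 0"
  then obtain t where t: "0 < t" "t < e" "b + t \<le> 0" "\<And>u. u \<le> 1 - 1 / t \<Longrightarrow> 1 \<le> t * (1 - u)"
    using escape_step b by metis
  define u where "u = min a (1 - 1 / t)"
  have x': "a \<le> 0" "b \<le> 0" "c \<le> 0" "a * b + c \<le> 1"
    using x by auto
  then have "a * (b + t) \<le> a * b"
    using t by (simp add: algebra_simps mult_nonpos_nonneg)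
  then have "(a, b + t, c) \<in> Xset"
    using t x' by auto
  moreover have "dist (a, b + t, c) (a, b, c) < e"
    using t by (simp add: dist_Pair_Pair dist_real_def)
  moreover have "down_proj (u, b + t, c) \<in> down_in Xset (a, b + t, c)"
    using t x' down_proj_mem_Xset[of u "b + t" c] by (auto simp: down_in_def u_def)
  moreover have "1 \<le> (fst (snd (down_proj (u, b + t, c))) - fst (snd (a, b, c))) *
      (1 - fst (down_proj (u, b + t, c)))"
    using t(4)[of u] by (simp add: u_def)
  ultimately show "\<exists>y\<in>Xset. dist y (a, b, c) < e \<and>
      (\<exists>p\<in>down_in Xset y. 1 \<le> (fst (snd p) - fst (snd (a, b, c))) * (1 - fst p))"
    by blast
qed (use x mono_coordinates_triple continuous_on_coordinates_triple in \<open>auto simp: Xset_def\<close>)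

lemma not_continuous_at_down_in_vietoris_axis:
  assumes c: "c < 0"
  shows "\<not> continuous_at_pt (top_of_set Xset) (subtopology (vietoris_topology (top_of_set Xset))
    (down_sets (top_of_set Xset))) (down_in Xset) (0, 0, c)"
proof (rule not_continuous_at_down_in_vietoris_escape[where f = "\<lambda>p. snd (snd p)" and g = fst])
  fix e :: real assume "e > 0"
  then obtain t where t: "0 < t" "t < e" "c + t \<le> 0" "\<And>u. u \<le> 1 - 1 / t \<Longrightarrow> 1 \<le> t * (1 - u)"
    using escape_step c by metis
  define u where "u = min 0 (1 - 1 / t)"
  have "(0, 0, c + t) \<in> Xset"
    using t by simp
  moreover have "dist (0, 0, c + t) (0, 0, c) < e"
    using t by (simp add: dist_Pair_Pair dist_real_def)
  moreover have "(u, 0, c + t) \<in> down_in Xset (0, 0, c + t)"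
    using t by (auto simp: down_in_def u_def)
  moreover have "1 \<le> (snd (snd (u, 0::real, c + t)) - snd (snd (0::real, 0::real, c))) *
      (1 - fst (u, 0::real, c + t))"
    using t(4)[of u] by (simp add: u_def)
  ultimately show "\<exists>y\<in>Xset. dist y (0, 0, c) < e \<and>
      (\<exists>p\<in>down_in Xset y. 1 \<le> (snd (snd p) - snd (snd (0::real, 0::real, c))) * (1 - fst p))"
    by blast
qed (use c mono_coordinates_triple continuous_on_coordinates_triple in \<open>auto simp: Xset_def\<close>)

lemma not_continuous_at_down_in_vietoris:
  assumes "x \<in> Xset - {(0, 0, 0)}"
  shows "\<not> continuous_at_pt (top_of_set Xset) (subtopology (vietoris_topology (top_of_set Xset))
    (down_sets (top_of_set Xset))) (down_in Xset) x"
proof -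
  obtain a b c where abc: "x = (a, b, c)" by (cases x)
  then have "(a, b, c) \<in> Xset" "a < 0 \<or> b < 0 \<or> (a = 0 \<and> b = 0 \<and> c < 0)"
    using assms by auto
  then show ?thesis
    using not_continuous_at_down_in_vietoris_fst not_continuous_at_down_in_vietoris_snd
      not_continuous_at_down_in_vietoris_axis abc by blast
qed

theorem mainTheorem11:
  defines "T \<equiv> subtopology euclidean Xset"
  shows "locally_compact_space T \<and> Hausdorff_space T \<and> order_connected T
    \<and> top_meet_semilattice T
    \<and> (\<forall>x\<in>Xset. \<forall>y\<in>Xset. x \<le> y \<longleftrightarrow> down_in Xset x \<subseteq> down_in Xset y)
    \<and> homeomorphic_map T (subtopology (fell_topology T) (down_sets T)) (down_in Xset)
    \<and> (\<forall>x\<in>Xset. \<not> continuous_at_pt T (hausdorff_topology (down_sets T)) (down_in Xset) x)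
    \<and> (\<forall>x\<in>Xset - {(0,0,0)}.
          \<not> continuous_at_pt T (subtopology (vietoris_topology T) (down_sets T)) (down_in Xset) x)
    \<and> continuous_at_pt T (subtopology (vietoris_topology T) (down_sets T)) (down_in Xset) (0,0,0)"
proof -
  have "locally_compact_space (top_of_set Xset)"
    by (simp add: closed_Xset locally_compact_space_closed_subset locally_compact_space_euclidean)
  moreover have "Hausdorff_space (top_of_set Xset)"
    by (simp add: Hausdorff_space_subtopology)
  moreover have "\<forall>x\<in>Xset. \<forall>y\<in>Xset. x \<le> y \<longleftrightarrow> down_in Xset x \<subseteq> down_in Xset y"
    using down_in_subset_down_in_iff by blast
  ultimately show ?thesis
    unfolding T_def
    using order_connected_Xset top_meet_semilattice_Xset homeomorphic_map_down_in_fell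
      not_continuous_at_down_in_hausdorff not_continuous_at_down_in_vietoris
      continuous_at_down_in_vietoris_origin
    by blast
qed

end
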